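(* Let $S=\{a,b,c,d,u,v,w,x\}$ be a set of letters and let $R_1=\{uav^{-1},wbv^{-1},udx^{-1},wcx^{-1}\}$, $R_2=\{bvw^{-1},cxw^{-1},avu^{-1},dxu^{-1}\}$, $R_3=\{vbw^{-1},xcw^{-1},uxd^{-1},uva^{-1}\}$, $R_4=\{dxu^{-1},avu^{-1},vwb^{-1},xwc^{-1}\}$, $R_5=\{vua^{-1},vwb^{-1},xwc^{-1},xud^{-1}\}$. For each $i\in\{1,2,3,4,5\}$, let $G_i$ be the group defined by $\langle S\mid R_i\rangle$ (identifying $S$ with its image in $G_i$). Then $\langle S\mid R_i\rangle$ is a restricted triangular presentation of $G_i$, and $S$ satisfies all of conditions (1)–(5) except condition $(i)$, which fails.
   Context: A presentation $\langle S\mid R\rangle$ of a group $G$ (with $S$ identified with a finite generating subset of $G$) is a restricted triangular presentation if: $S\cap S^{-1}=\emptyset$; $R=\{a\cdot b\cdot c^{-1}\mid a,b,c\in S,\ abc^{-1}=e\text{ in }G\}$ and $\langle S\mid R\rangle$ presents $G$; there are no $a,b,c\in S$ with $abc=e$ in $G$; and for $a,b,c\in S$, $abc\in S$ implies $ab\in S$ and $bc\in S$. Conditions (1)–(5) on $S$ (all equalities in $G$, all variables ranging over $S$): (1) If $ua=wb\in S$ and $ud=wc\in S$ with $u\neq w$, $a\neq d$, then there is $k\in S$ with $w=uk$ or $ua=udk$. (2) If $bv=cx\in S$ and $av=dx\in S$ with $v\neq x$, $a\neq b$, then there is $k\in S$ with $v=kx$ or $av=kbv$. (3) If $ux\in S$,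 $uv\in S$, $vb=xc\in S$ with $v\neq x$, then there is $k\in S$ with $k=uvb$ or $v=xk$. (4) If $vw\in S$, $xw\in S$, $dx=av\in S$ with $v\neq x$, then there is $k\in S$ with $k=avw$ or $x=kv$. (5) If $wv,wx,uv,ux\in S$ with $v\neq x$, $u\neq w$, then there is $k\in S$ with $w=ku$ or $x=vk$. *)

theory Defs
  imports Main
begin

text \<open>A word over the alphabet 'a is a list of signed letters: (s, True) is s,
  (s, False) is s^-1.  Two words are equal in the group presented by
  generators UNIV::'a set and relators R iff they are related by the
  congruence generated by free cancellation and insertion/deletion of
  relators.\<close>

type_synonym 'a word = "('a \<times> bool) list"

inductive eqG :: "'a word set \<Rightarrow> 'a word \<Rightarrow> 'a word \<Rightarrow> bool" for R where
  refl: "eqG R w w"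
| sym: "eqG R w w' \<Longrightarrow> eqG R w' w"
| trans: "eqG R w1 w2 \<Longrightarrow> eqG R w2 w3 \<Longrightarrow> eqG R w1 w3"
| cancel: "eqG R (p @ [(s, e), (s, \<not> e)] @ q) (p @ q)"
| rel: "r \<in> R \<Longrightarrow> eqG R (p @ r @ q) (p @ q)"

definition gen :: "'a \<Rightarrow> 'a word" where "gen s = [(s, True)]"
definition ginv :: "'a \<Rightarrow> 'a word" where "ginv s = [(s, False)]"

definition inS :: "'a word set \<Rightarrow> 'a word \<Rightarrow> bool" where
  "inS R w \<longleftrightarrow> (\<exists>s. eqG R w (gen s))"

definition restricted_triangular :: "'a word set \<Rightarrow> bool" where
  "restricted_triangular R \<longleftrightarrow>
     \<comment> \<open>S is identified with a subset of G: distinct letters are distinct elements\<close>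
     (\<forall>s t. eqG R (gen s) (gen t) \<longrightarrow> s = t) \<and>
     \<comment> \<open>S \<inter> S^-1 = {}\<close>
     (\<forall>s t. \<not> eqG R (gen s) (ginv t)) \<and>
     \<comment> \<open>R consists exactly of the words a b c^-1 that are trivial in G\<close>
     R = {gen a @ gen b @ ginv c | a b c. eqG R (gen a @ gen b @ ginv c) []} \<and>
     \<comment> \<open>no a b c = e\<close>
     (\<forall>a b c. \<not> eqG R (gen a @ gen b @ gen c) []) \<and>
     \<comment> \<open>abc \<in> S implies ab \<in> S and bc \<in> S\<close>
     (\<forall>a b c. inS R (gen a @ gen b @ gen c) \<longrightarrow>
        inS R (gen a @ gen b) \<and> inS R (gen b @ gen c))"

definition cond1 :: "'a word set \<Rightarrow> bool" where
  "cond1 R \<longleftrightarrow> (\<forall>u a w b d c.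
     eqG R (gen u @ gen a) (gen w @ gen b) \<and> inS R (gen u @ gen a) \<and>
     eqG R (gen u @ gen d) (gen w @ gen c) \<and> inS R (gen u @ gen d) \<and>
     \<not> eqG R (gen u) (gen w) \<and> \<not> eqG R (gen a) (gen d) \<longrightarrow>
     (\<exists>k. eqG R (gen w) (gen u @ gen k) \<or>
          eqG R (gen u @ gen a) (gen u @ gen d @ gen k)))"

definition cond2 :: "'a word set \<Rightarrow> bool" where
  "cond2 R \<longleftrightarrow> (\<forall>b v c x a d.
     eqG R (gen b @ gen v) (gen c @ gen x) \<and> inS R (gen b @ gen v) \<and>
     eqG R (gen a @ gen v) (gen d @ gen x) \<and> inS R (gen a @ gen v) \<and>
     \<not> eqG R (gen v) (gen x) \<and> \<not> eqG R (gen a) (gen b) \<longrightarrow>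
     (\<exists>k. eqG R (gen v) (gen k @ gen x) \<or>
          eqG R (gen a @ gen v) (gen k @ gen b @ gen v)))"

definition cond3 :: "'a word set \<Rightarrow> bool" where
  "cond3 R \<longleftrightarrow> (\<forall>u x v b c.
     inS R (gen u @ gen x) \<and> inS R (gen u @ gen v) \<and>
     eqG R (gen v @ gen b) (gen x @ gen c) \<and> inS R (gen v @ gen b) \<and>
     \<not> eqG R (gen v) (gen x) \<longrightarrow>
     (\<exists>k. eqG R (gen k) (gen u @ gen v @ gen b) \<or>
          eqG R (gen v) (gen x @ gen k)))"

definition cond4 :: "'a word set \<Rightarrow> bool" where
  "cond4 R \<longleftrightarrow> (\<forall>v w x d a.
     inS R (gen v @ gen w) \<and> inS R (gen x @ gen w) \<and>
     eqG R (gen d @ gen x) (gen a @ gen v) \<and> inS R (gen d @ gen x) \<and>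
     \<not> eqG R (gen v) (gen x) \<longrightarrow>
     (\<exists>k. eqG R (gen k) (gen a @ gen v @ gen w) \<or>
          eqG R (gen x) (gen k @ gen v)))"

definition cond5 :: "'a word set \<Rightarrow> bool" where
  "cond5 R \<longleftrightarrow> (\<forall>w v x u.
     inS R (gen w @ gen v) \<and> inS R (gen w @ gen x) \<and>
     inS R (gen u @ gen v) \<and> inS R (gen u @ gen x) \<and>
     \<not> eqG R (gen v) (gen x) \<and> \<not> eqG R (gen u) (gen w) \<longrightarrow>
     (\<exists>k. eqG R (gen w) (gen k @ gen u) \<or>
          eqG R (gen x) (gen v @ gen k)))"

datatype letter = A | B | C | D | U | V | W | X

definition rel3 :: "'a \<Rightarrow> 'a \<Rightarrow> 'a \<Rightarrow> 'a word" where
  "rel3 p q r = gen p @ gen q @ ginv r"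

definition R1 :: "letter word set" where
  "R1 = {rel3 U A V, rel3 W B V, rel3 U D X, rel3 W C X}"
definition R2 :: "letter word set" where
  "R2 = {rel3 B V W, rel3 C X W, rel3 A V U, rel3 D X U}"
definition R3 :: "letter word set" where
  "R3 = {rel3 V B W, rel3 X C W, rel3 U X D, rel3 U V A}"
definition R4 :: "letter word set" where
  "R4 = {rel3 D X U, rel3 A V U, rel3 V W B, rel3 X W C}"
definition R5 :: "letter word set" where
  "R5 = {rel3 V U A, rel3 V W B, rel3 X W C, rel3 X U D}"

end

theory Submission
  imports Defs
begin

text \<open>Each relator of R_i expresses one generator as the product of two others, and
  eliminating these four generators shows that G_i is free on the remaining four letters.
  Writing every letter in this free basis (the map phi_i below) and freely reducing gives a
  homomorphism from G_i to a free group, and computing with it shows that the two-letter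
  products lying in S are exactly those recorded by the relators, that S is disjoint from
  S^-1, and that no product of three letters is trivial or lies in S.  Conditions (1)--(5)
  thereby become statements about the finite multiplication table formed by the relators,
  which are checked by enumeration; condition (i) is violated by the four relators of R_i
  themselves.\<close>

definition inv_sym :: "'a \<times> bool \<Rightarrow> 'a \<times> bool" where
  "inv_sym x = (fst x, \<not> snd x)"

fun push_sym :: "'a \<times> bool \<Rightarrow> 'a word \<Rightarrow> 'a word" where
  "push_sym x [] = [x]"
| "push_sym x (y # ys) = (if y = inv_sym x then ys else x # y # ys)"

fun reduced :: "'a word \<Rightarrow> bool" where
  "reduced (x # y # ys) \<longleftrightarrow> y \<noteq> inv_sym x \<and> reduced (y # ys)"
| "reduced _ \<longleftrightarrow> True"

text \<open>For reduced l, reduce_onto w l is the free reduction of w @ l.\<close>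
fun reduce_onto :: "'a word \<Rightarrow> 'a word \<Rightarrow> 'a word" where
  "reduce_onto [] l = l"
| "reduce_onto (x # w) l = push_sym x (reduce_onto w l)"

definition word_inv :: "'a word \<Rightarrow> 'a word" where
  "word_inv w = rev (map inv_sym w)"

lemma inv_sym_inv_sym [simp]: "inv_sym (inv_sym x) = x"
  by (simp add: inv_sym_def)

lemma inv_sym_simps [simp]: "inv_sym (s, True) = (s, False)" "inv_sym (s, False) = (s, True)"
  by (simp_all add: inv_sym_def)

lemma reduced_ConsD: "reduced (y # ys) \<Longrightarrow> reduced ys"
  by (cases ys) auto

lemma reduced_push_sym: "reduced l \<Longrightarrow> reduced (push_sym x l)"
  by (cases l) (auto dest: reduced_ConsD)

lemma push_sym_inv_cancel: "reduced l \<Longrightarrow> push_sym x (push_sym (inv_sym x) l) = l"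
proof (cases l)
  case (Cons y ys)
  moreover assume "reduced l"
  ultimately show ?thesis
    by (cases ys) (auto simp: inv_sym_def)
qed (simp add: inv_sym_def)

lemma reduce_onto_append [simp]: "reduce_onto (v @ w) l = reduce_onto v (reduce_onto w l)"
  by (induction v) auto

lemma reduced_reduce_onto: "reduced l \<Longrightarrow> reduced (reduce_onto w l)"
  by (induction w) (auto intro: reduced_push_sym)

lemma reduce_onto_inv_right: "reduced l \<Longrightarrow> reduce_onto w (reduce_onto (word_inv w) l) = l"
proof (induction w arbitrary: l)
  case (Cons x w)
  then have "reduce_onto (x # w) (reduce_onto (word_inv (x # w)) l)
      = push_sym x (push_sym (inv_sym x) l)"
    by (simp add: word_inv_def reduced_push_sym)
  with Cons.prems show ?case
    by (simp add: push_sym_inv_cancel)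
qed (simp add: word_inv_def)

lemma reduce_onto_inv_left: "reduced l \<Longrightarrow> reduce_onto (word_inv w) (reduce_onto w l) = l"
  using reduce_onto_inv_right[of l "word_inv w"] by (simp add: word_inv_def rev_map comp_def)

lemma push_sym_reduce_onto:
  assumes "reduced v" and "reduced l"
  shows "push_sym x (reduce_onto v l) = reduce_onto (push_sym x v) l"
proof (cases v)
  case (Cons y v')
  show ?thesis
  proof (cases "y = inv_sym x")
    case True
    with Cons assms have "push_sym x (reduce_onto v l) = reduce_onto v' l"
      using push_sym_inv_cancel[of "reduce_onto v' l" x]
      by (simp add: reduced_reduce_onto)
    with Cons True show ?thesis by simp
  qed (use Cons in simp)
qed simp

lemma reduce_onto_reduce: "reduced l \<Longrightarrow> reduce_onto w l = reduce_onto (reduce_onto w []) l"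
  by (induction w) (simp_all add: push_sym_reduce_onto reduced_reduce_onto)

fun subst_sym :: "('a \<Rightarrow> 'b word) \<Rightarrow> 'a \<times> bool \<Rightarrow> 'b word" where
  "subst_sym \<phi> (s, True) = \<phi> s"
| "subst_sym \<phi> (s, False) = word_inv (\<phi> s)"

definition subst_word :: "('a \<Rightarrow> 'b word) \<Rightarrow> 'a word \<Rightarrow> 'b word" where
  "subst_word \<phi> w = concat (map (subst_sym \<phi>) w)"

definition reduced_image :: "('a \<Rightarrow> 'b word) \<Rightarrow> 'a word \<Rightarrow> 'b word" where
  "reduced_image \<phi> w = reduce_onto (subst_word \<phi> w) []"

lemma subst_word_append [simp]: "subst_word \<phi> (v @ w) = subst_word \<phi> v @ subst_word \<phi> w"
  by (simp add: subst_word_def)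

lemma subst_word_simps [simp]:
  "subst_word \<phi> [] = []" "subst_word \<phi> (x # w) = subst_sym \<phi> x @ subst_word \<phi> w"
  by (simp_all add: subst_word_def)

lemma reduced_image_eq_if_eqG:
  assumes relators: "\<And>r. r \<in> R \<Longrightarrow> reduced_image \<phi> r = []" and "eqG R w w'"
  shows "reduced_image \<phi> w = reduced_image \<phi> w'"
proof -
  \<comment> \<open>Generalised to an arbitrary reduced suffix l, so that cancelling a pair or deleting
    a relator can happen in the middle of a word.\<close>
  have "reduce_onto (subst_word \<phi> w) l = reduce_onto (subst_word \<phi> w') l" if "reduced l" for l
    using assms(2) that
  proof (induction arbitrary: l rule: eqG.induct)
    case (cancel p s e q)
    then have "reduced (reduce_onto (subst_word \<phi> q) l)"
      by (simp add: reduced_reduce_onto)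
    then show ?case
      by (cases e) (simp_all add: reduce_onto_inv_left reduce_onto_inv_right)
  next
    case (rel r p q)
    then have "reduced (reduce_onto (subst_word \<phi> q) l)"
      by (simp add: reduced_reduce_onto)
    then have "reduce_onto (subst_word \<phi> r) (reduce_onto (subst_word \<phi> q) l)
        = reduce_onto (subst_word \<phi> q) l"
      using reduce_onto_reduce relators[OF rel.hyps]
      by (metis reduce_onto.simps(1) reduced_image_def)
    then show ?case
      by simp
  qed auto
  then show ?thesis
    by (simp add: reduced_image_def)
qed

lemma eqG_append_cong: "eqG R x y \<Longrightarrow> eqG R (p @ x @ q) (p @ y @ q)"
proof (induction rule: eqG.induct)
  case (cancel p' s e q')
  show ?case using eqG.cancel[of R "p @ p'" s e "q' @ q"] by simp
next
  case (rel r p' q')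
  show ?case using eqG.rel[of r R "p @ p'" "q' @ q"] rel by simp
qed (auto intro: eqG.intros)

lemma eqG_append_right: "eqG R x y \<Longrightarrow> eqG R (x @ q) (y @ q)"
  using eqG_append_cong[of R x y "[]" q] by simp

lemma eqG_append_left: "eqG R x y \<Longrightarrow> eqG R (p @ x) (p @ y)"
  using eqG_append_cong[of R x y p "[]"] by simp

lemma eqG_cong_iff: "eqG R x x' \<Longrightarrow> eqG R y y' \<Longrightarrow> eqG R x y \<longleftrightarrow> eqG R x' y'"
  by (meson eqG.sym eqG.trans)

lemma eqG_gen_cancel: "eqG R (x @ ginv c @ gen c) x"
  using eqG.cancel[of R x c False "[]"] by (simp add: gen_def ginv_def)

lemma eqG_relator: "rel3 p q r \<in> R \<Longrightarrow> eqG R (gen p @ gen q) (gen r)"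
  using eqG.rel[of "rel3 p q r" R "[]" "gen r"] eqG_gen_cancel[of R "gen p @ gen q" r]
  by (simp add: rel3_def) (meson eqG.sym eqG.trans)

lemma eqG_append_ginv_Nil_iff: "eqG R (x @ ginv c) [] \<longleftrightarrow> eqG R x (gen c)"
proof
  assume "eqG R (x @ ginv c) []"
  from eqG_append_right[OF this, of "gen c"] show "eqG R x (gen c)"
    using eqG_gen_cancel[of R x c] by simp (meson eqG.sym eqG.trans)
next
  assume "eqG R x (gen c)"
  moreover have "eqG R (gen c @ ginv c) []"
    using eqG.cancel[of R "[]" c True "[]"] by (simp add: gen_def ginv_def)
  ultimately show "eqG R (x @ ginv c) []"
    using eqG_append_right eqG.trans by blast
qed

text \<open>Conditions (1)--(5) restated for a multiplication table T on S, where (p, q, r) \<in> T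
  stands for pq = r in G.\<close>

definition table_cond1 :: "('a \<times> 'a \<times> 'a) set \<Rightarrow> bool" where
  "table_cond1 T \<longleftrightarrow> (\<forall>u a w b d c s1 s2.
     (u, a, s1) \<in> T \<and> (w, b, s1) \<in> T \<and> (u, d, s2) \<in> T \<and> (w, c, s2) \<in> T \<and> u \<noteq> w \<and> a \<noteq> d
       \<longrightarrow> (\<exists>k. (u, k, w) \<in> T \<or> (s2, k, s1) \<in> T))"

definition table_cond2 :: "('a \<times> 'a \<times> 'a) set \<Rightarrow> bool" where
  "table_cond2 T \<longleftrightarrow> (\<forall>b v c x a d s1 s2.
     (b, v, s1) \<in> T \<and> (c, x, s1) \<in> T \<and> (a, v, s2) \<in> T \<and> (d, x, s2) \<in> T \<and> v \<noteq> x \<and> a \<noteq> b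
       \<longrightarrow> (\<exists>k. (k, x, v) \<in> T \<or> (k, s1, s2) \<in> T))"

definition table_cond3 :: "('a \<times> 'a \<times> 'a) set \<Rightarrow> bool" where
  "table_cond3 T \<longleftrightarrow> (\<forall>u x v b c t1 t2 s.
     (u, x, t1) \<in> T \<and> (u, v, t2) \<in> T \<and> (v, b, s) \<in> T \<and> (x, c, s) \<in> T \<and> v \<noteq> x
       \<longrightarrow> (\<exists>k. (t2, b, k) \<in> T \<or> (x, k, v) \<in> T))"

definition table_cond4 :: "('a \<times> 'a \<times> 'a) set \<Rightarrow> bool" where
  "table_cond4 T \<longleftrightarrow> (\<forall>v w x d a t1 t2 s.
     (v, w, t1) \<in> T \<and> (x, w, t2) \<in> T \<and> (d, x, s) \<in> T \<and> (a, v, s) \<in> T \<and> v \<noteq> x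
       \<longrightarrow> (\<exists>k. (s, w, k) \<in> T \<or> (k, v, x) \<in> T))"

definition table_cond5 :: "('a \<times> 'a \<times> 'a) set \<Rightarrow> bool" where
  "table_cond5 T \<longleftrightarrow> (\<forall>w v x u t1 t2 t3 t4.
     (w, v, t1) \<in> T \<and> (w, x, t2) \<in> T \<and> (u, v, t3) \<in> T \<and> (u, x, t4) \<in> T \<and> v \<noteq> x \<and> u \<noteq> w
       \<longrightarrow> (\<exists>k. (k, u, w) \<in> T \<or> (v, k, x) \<in> T))"

text \<open>By relators_trivial, reduced_image \<phi> factors through the group presented by R, giving a
  homomorphism into the free group on 'b.\<close>

locale free_model =
  fixes R :: "'a word set" and T :: "('a \<times> 'a \<times> 'a) set" and \<phi> :: "'a \<Rightarrow> 'b word"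
  assumes relators_eq: "R = {rel3 p q r | p q r. (p, q, r) \<in> T}"
    and relators_trivial: "\<And>r. r \<in> R \<Longrightarrow> reduced_image \<phi> r = []"
    and inj_gen: "inj (\<lambda>s. reduced_image \<phi> (gen s))"
    and products_in_table:
      "\<And>p q r. reduced_image \<phi> (gen p @ gen q) = reduced_image \<phi> (gen r) \<Longrightarrow> (p, q, r) \<in> T"
    and gen_neq_ginv: "\<And>s t. reduced_image \<phi> (gen s) \<noteq> reduced_image \<phi> (ginv t)"
    and triple_neq_Nil: "\<And>a b c. reduced_image \<phi> (gen a @ gen b @ gen c) \<noteq> []"
    and triple_neq_gen:
      "\<And>a b c s. reduced_image \<phi> (gen a @ gen b @ gen c) \<noteq> reduced_image \<phi> (gen s)"
begin

lemma eqG_imp_image_eq: "eqG R x y \<Longrightarrow> reduced_image \<phi> x = reduced_image \<phi> y"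
  by (rule reduced_image_eq_if_eqG[OF relators_trivial])

lemma eqG_gen_iff [simp]: "eqG R (gen p) (gen q) \<longleftrightarrow> p = q"
  using eqG_imp_image_eq inj_gen by (auto dest: injD intro: eqG.refl)

lemma eqG_pair_gen_iff: "eqG R (gen p @ gen q) (gen r) \<longleftrightarrow> (p, q, r) \<in> T"
proof
  assume "eqG R (gen p @ gen q) (gen r)"
  then show "(p, q, r) \<in> T"
    by (rule products_in_table[OF eqG_imp_image_eq])
next
  assume "(p, q, r) \<in> T"
  then have "rel3 p q r \<in> R"
    unfolding relators_eq by blast
  then show "eqG R (gen p @ gen q) (gen r)"
    by (rule eqG_relator)
qed

lemma eqG_gen_pair_iff: "eqG R (gen r) (gen p @ gen q) \<longleftrightarrow> (p, q, r) \<in> T"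
  using eqG_pair_gen_iff eqG.sym by blast

lemma inS_pair_iff: "inS R (gen p @ gen q) \<longleftrightarrow> (\<exists>r. (p, q, r) \<in> T)"
  by (simp add: inS_def eqG_pair_gen_iff)

lemma eqG_pair_pair_iff:
  "eqG R (gen p @ gen q) (gen p' @ gen q') \<and> inS R (gen p @ gen q)
     \<longleftrightarrow> (\<exists>s. (p, q, s) \<in> T \<and> (p', q', s) \<in> T)"
proof
  assume eq: "eqG R (gen p @ gen q) (gen p' @ gen q') \<and> inS R (gen p @ gen q)"
  then obtain s where s: "(p, q, s) \<in> T"
    by (auto simp: inS_pair_iff)
  then have "eqG R (gen p @ gen q) (gen s)"
    by (simp add: eqG_pair_gen_iff)
  with eq have "eqG R (gen p' @ gen q') (gen s)"
    by (meson eqG.sym eqG.trans)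
  with s show "\<exists>s. (p, q, s) \<in> T \<and> (p', q', s) \<in> T"
    by (auto simp: eqG_pair_gen_iff)
next
  assume "\<exists>s. (p, q, s) \<in> T \<and> (p', q', s) \<in> T"
  then obtain s where "eqG R (gen p @ gen q) (gen s)" "eqG R (gen s) (gen p' @ gen q')"
    and "(p, q, s) \<in> T"
    by (auto simp: eqG_pair_gen_iff eqG_gen_pair_iff)
  then show "eqG R (gen p @ gen q) (gen p' @ gen q') \<and> inS R (gen p @ gen q)"
    by (auto simp: inS_pair_iff intro: eqG.trans)
qed

lemma eqG_pair_left_iff: "(p, q, s) \<in> T \<Longrightarrow> eqG R (gen p @ gen q) y \<longleftrightarrow> eqG R (gen s) y"
  using eqG_cong_iff[OF _ eqG.refl] eqG_pair_gen_iff by metis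

lemma eqG_pair_front_iff:
  "(p, q, s) \<in> T \<Longrightarrow> eqG R x (gen p @ gen q @ y) \<longleftrightarrow> eqG R x (gen s @ y)"
  using eqG_cong_iff[OF eqG.refl eqG_append_right[of R "gen p @ gen q" "gen s" y]]
  by (simp add: eqG_pair_gen_iff)

lemma eqG_pair_back_iff:
  "(p, q, s) \<in> T \<Longrightarrow> eqG R x (y @ gen p @ gen q) \<longleftrightarrow> eqG R x (y @ gen s)"
  using eqG_cong_iff[OF eqG.refl eqG_append_left[of R "gen p @ gen q" "gen s" y]]
  by (simp add: eqG_pair_gen_iff)

lemma eqG_pair_pair_conj_iff:
  "eqG R (gen p @ gen q) (gen p' @ gen q') \<and> inS R (gen p @ gen q) \<and> P
     \<longleftrightarrow> (\<exists>s. (p, q, s) \<in> T \<and> (p', q', s) \<in> T) \<and> P"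
  using eqG_pair_pair_iff by blast

lemma restricted_triangular: "restricted_triangular R"
proof -
  have "eqG R (gen a @ gen b @ ginv c) [] \<longleftrightarrow> (a, b, c) \<in> T" for a b c
    using eqG_append_ginv_Nil_iff[of R "gen a @ gen b" c] by (simp add: eqG_pair_gen_iff)
  then have "R = {gen a @ gen b @ ginv c | a b c. eqG R (gen a @ gen b @ ginv c) []}"
    by (simp add: relators_eq rel3_def)
  moreover have "\<not> eqG R (gen s) (ginv t)" for s t
    using eqG_imp_image_eq gen_neq_ginv by blast
  moreover have "\<not> eqG R (gen a @ gen b @ gen c) []" for a b c
    using eqG_imp_image_eq triple_neq_Nil by (fastforce simp: reduced_image_def)
  moreover have "\<not> inS R (gen a @ gen b @ gen c)" for a b c
    using eqG_imp_image_eq triple_neq_gen by (fastforce simp: inS_def)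
  ultimately show ?thesis
    unfolding restricted_triangular_def by simp
qed

lemma cond1_iff: "cond1 R \<longleftrightarrow> table_cond1 T"
proof -
  have "eqG R (gen u @ gen a) (gen u @ gen d @ gen k) \<longleftrightarrow> (s2, k, s1) \<in> T"
    if "(u, a, s1) \<in> T" "(u, d, s2) \<in> T" for u a d k s1 s2
    by (simp add: eqG_pair_left_iff[OF that(1)] eqG_pair_front_iff[OF that(2)] eqG_gen_pair_iff)
  then show ?thesis
    unfolding cond1_def table_cond1_def eqG_gen_iff eqG_gen_pair_iff
    by (simp add: eqG_pair_pair_conj_iff) blast
qed

lemma cond2_iff: "cond2 R \<longleftrightarrow> table_cond2 T"
proof -
  have "eqG R (gen a @ gen v) (gen k @ gen b @ gen v) \<longleftrightarrow> (k, s1, s2) \<in> T"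
    if "(b, v, s1) \<in> T" "(a, v, s2) \<in> T" for a b v k s1 s2
    using eqG_pair_left_iff[OF that(2)] eqG_pair_back_iff[OF that(1), of _ "gen k"]
    by (simp add: eqG_gen_pair_iff)
  then show ?thesis
    unfolding cond2_def table_cond2_def eqG_gen_iff eqG_gen_pair_iff
    by (simp add: eqG_pair_pair_conj_iff) blast
qed

lemma cond3_iff: "cond3 R \<longleftrightarrow> table_cond3 T"
proof -
  have "eqG R (gen k) (gen u @ gen v @ gen b) \<longleftrightarrow> (t, b, k) \<in> T"
    if "(u, v, t) \<in> T" for u v b k t
    by (simp add: eqG_pair_front_iff[OF that] eqG_gen_pair_iff)
  then show ?thesis
    unfolding cond3_def table_cond3_def eqG_gen_iff eqG_gen_pair_iff eqG_pair_pair_conj_iff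
    by (simp add: inS_pair_iff) blast
qed

lemma cond4_iff: "cond4 R \<longleftrightarrow> table_cond4 T"
proof -
  have "eqG R (gen k) (gen a @ gen v @ gen w) \<longleftrightarrow> (s, w, k) \<in> T"
    if "(a, v, s) \<in> T" for a v w k s
    by (simp add: eqG_pair_front_iff[OF that] eqG_gen_pair_iff)
  then show ?thesis
    unfolding cond4_def table_cond4_def eqG_gen_iff eqG_gen_pair_iff eqG_pair_pair_conj_iff
    by (simp add: inS_pair_iff) blast
qed

lemma cond5_iff: "cond5 R \<longleftrightarrow> table_cond5 T"
  unfolding cond5_def table_cond5_def eqG_gen_iff eqG_gen_pair_iff inS_pair_iff by blast

end

lemma letter_forall: "(\<forall>x::letter. P x) \<longleftrightarrow> P A \<and> P B \<and> P C \<and> P D \<and> P U \<and> P V \<and> P W \<and> P X"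
  by (metis letter.exhaust)

lemmas reduced_image_eval = reduced_image_def gen_def ginv_def word_inv_def inv_sym_def

fun phi1 :: "letter \<Rightarrow> letter word" where
  "phi1 A = ginv U @ gen W @ gen B"
| "phi1 B = gen B"
| "phi1 C = gen C"
| "phi1 D = ginv U @ gen W @ gen C"
| "phi1 U = gen U"
| "phi1 V = gen W @ gen B"
| "phi1 W = gen W"
| "phi1 X = gen W @ gen C"

definition T1 :: "(letter \<times> letter \<times> letter) set" where
  "T1 = {(U, A, V), (W, B, V), (U, D, X), (W, C, X)}"

interpretation G1: free_model R1 T1 phi1
  by (unfold_locales; (atomize (full))?;
      auto simp: R1_def T1_def rel3_def inj_def letter_forall reduced_image_eval)

lemma not_table_cond1_T1: "\<not> table_cond1 T1"
proof
  assume cond: "table_cond1 T1"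
  \<comment> \<open>The instantiation follows the order of first occurrence: u a s1 w b d s2 c.\<close>
  have "\<exists>k. (U, k, W) \<in> T1 \<or> (X, k, V) \<in> T1"
    by (rule cond[unfolded table_cond1_def, rule_format, of U A V W B D X C]) (simp add: T1_def)
  then show False
    by (auto simp: T1_def)
qed

lemma presentation1:
  "restricted_triangular R1 \<and> \<not> cond1 R1 \<and> cond2 R1 \<and> cond3 R1 \<and> cond4 R1 \<and> cond5 R1"
proof -
  have "table_cond2 T1" "table_cond3 T1" "table_cond4 T1" "table_cond5 T1"
    by (auto simp: table_cond2_def table_cond3_def table_cond4_def table_cond5_def T1_def)
  with not_table_cond1_T1 show ?thesis
    by (simp add: G1.restricted_triangular G1.cond1_iff G1.cond2_iff
        G1.cond3_iff G1.cond4_iff G1.cond5_iff)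
qed

fun phi2 :: "letter \<Rightarrow> letter word" where
  "phi2 A = gen A"
| "phi2 B = gen B"
| "phi2 C = gen B @ gen V @ ginv X"
| "phi2 D = gen A @ gen V @ ginv X"
| "phi2 U = gen A @ gen V"
| "phi2 V = gen V"
| "phi2 W = gen B @ gen V"
| "phi2 X = gen X"

definition T2 :: "(letter \<times> letter \<times> letter) set" where
  "T2 = {(B, V, W), (C, X, W), (A, V, U), (D, X, U)}"

interpretation G2: free_model R2 T2 phi2
  by (unfold_locales; (atomize (full))?;
      auto simp: R2_def T2_def rel3_def inj_def letter_forall reduced_image_eval)

lemma not_table_cond2_T2: "\<not> table_cond2 T2"
proof
  assume cond: "table_cond2 T2"
  have "\<exists>k. (k, X, V) \<in> T2 \<or> (k, W, U) \<in> T2"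
    by (rule cond[unfolded table_cond2_def, rule_format, of B V W C X A U D]) (simp add: T2_def)
  then show False
    by (auto simp: T2_def)
qed

lemma presentation2:
  "restricted_triangular R2 \<and> cond1 R2 \<and> \<not> cond2 R2 \<and> cond3 R2 \<and> cond4 R2 \<and> cond5 R2"
proof -
  have "table_cond1 T2" "table_cond3 T2" "table_cond4 T2" "table_cond5 T2"
    by (auto simp: table_cond1_def table_cond3_def table_cond4_def table_cond5_def T2_def)
  with not_table_cond2_T2 show ?thesis
    by (simp add: G2.restricted_triangular G2.cond1_iff G2.cond2_iff
        G2.cond3_iff G2.cond4_iff G2.cond5_iff)
qed

fun phi3 :: "letter \<Rightarrow> letter word" where
  "phi3 A = gen U @ gen V"
| "phi3 B = gen B"
| "phi3 C = ginv X @ gen V @ gen B"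
| "phi3 D = gen U @ gen X"
| "phi3 U = gen U"
| "phi3 V = gen V"
| "phi3 W = gen V @ gen B"
| "phi3 X = gen X"

definition T3 :: "(letter \<times> letter \<times> letter) set" where
  "T3 = {(V, B, W), (X, C, W), (U, X, D), (U, V, A)}"

interpretation G3: free_model R3 T3 phi3
  by (unfold_locales; (atomize (full))?;
      auto simp: R3_def T3_def rel3_def inj_def letter_forall reduced_image_eval)

lemma not_table_cond3_T3: "\<not> table_cond3 T3"
proof
  assume cond: "table_cond3 T3"
  have "\<exists>k. (A, B, k) \<in> T3 \<or> (X, k, V) \<in> T3"
    by (rule cond[unfolded table_cond3_def, rule_format, of U X D V A B W C]) (simp add: T3_def)
  then show False
    by (auto simp: T3_def)
qed

lemma presentation3:
  "restricted_triangular R3 \<and> cond1 R3 \<and> cond2 R3 \<and> \<not> cond3 R3 \<and> cond4 R3 \<and> cond5 R3"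
proof -
  have "table_cond1 T3" "table_cond2 T3" "table_cond4 T3" "table_cond5 T3"
    by (auto simp: table_cond1_def table_cond2_def table_cond4_def table_cond5_def T3_def)
  with not_table_cond3_T3 show ?thesis
    by (simp add: G3.restricted_triangular G3.cond1_iff G3.cond2_iff
        G3.cond3_iff G3.cond4_iff G3.cond5_iff)
qed

fun phi4 :: "letter \<Rightarrow> letter word" where
  "phi4 A = gen D @ gen X @ ginv V"
| "phi4 B = gen V @ gen W"
| "phi4 C = gen X @ gen W"
| "phi4 D = gen D"
| "phi4 U = gen D @ gen X"
| "phi4 V = gen V"
| "phi4 W = gen W"
| "phi4 X = gen X"

definition T4 :: "(letter \<times> letter \<times> letter) set" where
  "T4 = {(D, X, U), (A, V, U), (V, W, B), (X, W, C)}"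

interpretation G4: free_model R4 T4 phi4
  by (unfold_locales; (atomize (full))?;
      auto simp: R4_def T4_def rel3_def inj_def letter_forall reduced_image_eval)

lemma not_table_cond4_T4: "\<not> table_cond4 T4"
proof
  assume cond: "table_cond4 T4"
  have "\<exists>k. (U, W, k) \<in> T4 \<or> (k, V, X) \<in> T4"
    by (rule cond[unfolded table_cond4_def, rule_format, of V W B X C D U A]) (simp add: T4_def)
  then show False
    by (auto simp: T4_def)
qed

lemma presentation4:
  "restricted_triangular R4 \<and> cond1 R4 \<and> cond2 R4 \<and> cond3 R4 \<and> \<not> cond4 R4 \<and> cond5 R4"
proof -
  have "table_cond1 T4" "table_cond2 T4" "table_cond3 T4" "table_cond5 T4"
    by (auto simp: table_cond1_def table_cond2_def table_cond3_def table_cond5_def T4_def)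
  with not_table_cond4_T4 show ?thesis
    by (simp add: G4.restricted_triangular G4.cond1_iff G4.cond2_iff
        G4.cond3_iff G4.cond4_iff G4.cond5_iff)
qed

fun phi5 :: "letter \<Rightarrow> letter word" where
  "phi5 A = gen V @ gen U"
| "phi5 B = gen V @ gen W"
| "phi5 C = gen X @ gen W"
| "phi5 D = gen X @ gen U"
| "phi5 U = gen U"
| "phi5 V = gen V"
| "phi5 W = gen W"
| "phi5 X = gen X"

definition T5 :: "(letter \<times> letter \<times> letter) set" where
  "T5 = {(V, U, A), (V, W, B), (X, W, C), (X, U, D)}"

interpretation G5: free_model R5 T5 phi5
  by (unfold_locales; (atomize (full))?;
      auto simp: R5_def T5_def rel3_def inj_def letter_forall reduced_image_eval)

lemma not_table_cond5_T5: "\<not> table_cond5 T5"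
proof
  assume cond: "table_cond5 T5"
  have "\<exists>k. (k, X, V) \<in> T5 \<or> (U, k, W) \<in> T5"
    by (rule cond[unfolded table_cond5_def, rule_format, of V U A W B X D C]) (simp add: T5_def)
  then show False
    by (auto simp: T5_def)
qed

lemma presentation5:
  "restricted_triangular R5 \<and> cond1 R5 \<and> cond2 R5 \<and> cond3 R5 \<and> cond4 R5 \<and> \<not> cond5 R5"
proof -
  have "table_cond1 T5" "table_cond2 T5" "table_cond3 T5" "table_cond4 T5"
    by (auto simp: table_cond1_def table_cond2_def table_cond3_def table_cond4_def T5_def)
  with not_table_cond5_T5 show ?thesis
    by (simp add: G5.restricted_triangular G5.cond1_iff G5.cond2_iff
        G5.cond3_iff G5.cond4_iff G5.cond5_iff)
qed

theorem mainTheorem7: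
  shows "(restricted_triangular R1 \<and> \<not> cond1 R1 \<and> cond2 R1 \<and> cond3 R1 \<and> cond4 R1 \<and> cond5 R1) \<and>
         (restricted_triangular R2 \<and> cond1 R2 \<and> \<not> cond2 R2 \<and> cond3 R2 \<and> cond4 R2 \<and> cond5 R2) \<and>
         (restricted_triangular R3 \<and> cond1 R3 \<and> cond2 R3 \<and> \<not> cond3 R3 \<and> cond4 R3 \<and> cond5 R3) \<and>
         (restricted_triangular R4 \<and> cond1 R4 \<and> cond2 R4 \<and> cond3 R4 \<and> \<not> cond4 R4 \<and> cond5 R4) \<and>
         (restricted_triangular R5 \<and> cond1 R5 \<and> cond2 R5 \<and> cond3 R5 \<and> cond4 R5 \<and> \<not> cond5 R5)"
  using presentation1 presentation2 presentation3 presentation4 presentation5 by blast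

end
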